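(* Let $\mathcal{G}$ be a finite-dimensional solvable Lie algebra and let $S$ be a finite abelian semigroup containing a zero element $0_S$. Then the $0_S$-reduced algebra $\mathcal{G}_S^{\mathrm{red}}$ obtained from the $S$-expanded algebra $\mathcal{G}_S=S\otimes\mathcal{G}$ is solvable.
   Context: For a Lie algebra $\mathcal{G}$ with basis $\{X_i\}$, $[X_i,X_j]=C_{ij}^kX_k$, and a finite abelian semigroup $S=\{\lambda_\alpha\}$ with 2-selector $K_{\alpha\beta}^\gamma$ ($=1$ if $\lambda_\alpha\lambda_\beta=\lambda_\gamma$, else $0$), the $S$-expanded algebra $\mathcal{G}_S=S\otimes\mathcal{G}$ has basis $X_{(i,\alpha)}=\lambda_\alpha\otimes X_i$ and bracket $[X_{(i,\alpha)},X_{(j,\beta)}]=K_{\alpha\beta}^\gamma C_{ij}^k X_{(k,\gamma)}$. A zero element is $0_S\in S$ with $0_S\lambda=0_S$ for all $\lambda\in S$. The $0_S$-reduced algebra $\mathcal{G}_S^{\mathrm{red}}$ is the Lie algebra spanned by $X_{(i,\alpha)}$ with $\lambda_\alpha\neq 0_S$, with bracket $[X_{(i,\alpha)},X_{(j,\beta)}]=\sum_{\gamma:\lambda_\gamma\neq0_S}K_{\alpha\beta}^\gamma C_{ij}^k X_{(k,\gamma)}$ (i.e. obtained by setting $0_S\otimes\mathcal{G}=0$). *)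

theory Defs
  imports Main
begin

text \<open>Finite-dimensional Lie algebras are given by a finite index set I of basis
  elements and structure constants C i j k (so [X_i,X_j] = sum_k C i j k X_k).
  Elements are coordinate vectors 'a => 'k supported on I.\<close>

definition lie_space :: "'a set \<Rightarrow> ('a \<Rightarrow> 'k::field) set" where
  "lie_space I = {x. \<forall>k. k \<notin> I \<longrightarrow> x k = 0}"

definition lin_span :: "('a \<Rightarrow> 'k::field) set \<Rightarrow> ('a \<Rightarrow> 'k) set" where
  "lin_span A = {x. \<exists>F c. finite F \<and> F \<subseteq> A \<and> x = (\<lambda>k. \<Sum>v\<in>F. c v * v k)}"

definition bracket :: "('a \<Rightarrow> 'a \<Rightarrow> 'a \<Rightarrow> 'k::field) \<Rightarrow> 'a set
    \<Rightarrow> ('a \<Rightarrow> 'k) \<Rightarrow> ('a \<Rightarrow> 'k) \<Rightarrow> ('a \<Rightarrow> 'k)" where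
  "bracket C I x y = (\<lambda>k. if k \<in> I then (\<Sum>i\<in>I. \<Sum>j\<in>I. x i * y j * C i j k) else 0)"

definition is_lie_algebra :: "('a \<Rightarrow> 'a \<Rightarrow> 'a \<Rightarrow> 'k::field) \<Rightarrow> 'a set \<Rightarrow> bool" where
  "is_lie_algebra C I \<longleftrightarrow> finite I \<and>
     (\<forall>i\<in>I. \<forall>j\<in>I. \<forall>k\<in>I. C i j k = - C j i k) \<and>
     (\<forall>i\<in>I. \<forall>j\<in>I. \<forall>l\<in>I. \<forall>n\<in>I.
        (\<Sum>m\<in>I. C i j m * C m l n + C j l m * C m i n + C l i m * C m j n) = 0)"

fun derived :: "('a \<Rightarrow> 'a \<Rightarrow> 'a \<Rightarrow> 'k::field) \<Rightarrow> 'a set \<Rightarrow> nat \<Rightarrow> ('a \<Rightarrow> 'k) set" where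
  "derived C I 0 = lie_space I"
| "derived C I (Suc n) =
     lin_span {bracket C I x y | x y. x \<in> derived C I n \<and> y \<in> derived C I n}"

definition solvable_lie :: "('a \<Rightarrow> 'a \<Rightarrow> 'a \<Rightarrow> 'k::field) \<Rightarrow> 'a set \<Rightarrow> bool" where
  "solvable_lie C I \<longleftrightarrow> (\<exists>n. derived C I n = {\<lambda>_. 0})"

definition selector :: "'s::ab_semigroup_mult \<Rightarrow> 's \<Rightarrow> 's \<Rightarrow> 'k::field" where
  "selector \<alpha> \<beta> \<gamma> = (if \<alpha> * \<beta> = \<gamma> then 1 else 0)"

definition expanded_sc :: "('i \<Rightarrow> 'i \<Rightarrow> 'i \<Rightarrow> 'k::field)
    \<Rightarrow> ('i \<times> 's::ab_semigroup_mult) \<Rightarrow> ('i \<times> 's) \<Rightarrow> ('i \<times> 's) \<Rightarrow> 'k" where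
  "expanded_sc C = (\<lambda>(i,\<alpha>) (j,\<beta>) (k,\<gamma>). selector \<alpha> \<beta> \<gamma> * C i j k)"

text \<open>Basis index set of the 0_S-reduced algebra: pairs with lambda_alpha /= 0_S.
  The reduced algebra is (expanded_sc C) restricted to this index set.\<close>
definition reduced_index :: "'s \<Rightarrow> ('i \<times> 's) set" where
  "reduced_index z = UNIV \<times> {\<alpha>. \<alpha> \<noteq> z}"

end

theory Submission
  imports Defs
begin

text \<open>Write x_a for the a-slice of an element x of the expansion.  The expanded bracket
  is [x, y]_c = \<Sum>_(a,b) K_ab^c [x_a, y_b], a linear combination of brackets in G, so
  by induction every slice of an element of the n-th derived algebra of the expansion
  lies in the n-th derived algebra of G; once that one is 0, all slices vanish.\<close>

definition is_subspace :: "('a \<Rightarrow> 'k::field) set \<Rightarrow> bool" where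
  "is_subspace S \<longleftrightarrow> (\<lambda>_. 0) \<in> S \<and> (\<forall>x\<in>S. \<forall>y\<in>S. (\<lambda>k. x k + y k) \<in> S)
     \<and> (\<forall>a. \<forall>x\<in>S. (\<lambda>k. a * x k) \<in> S)"

lemma is_subspace_sum:
  assumes "is_subspace S" "finite A" "\<And>a. a \<in> A \<Longrightarrow> f a \<in> S"
  shows "(\<lambda>k. \<Sum>a\<in>A. c a * f a k) \<in> S"
  using assms(2,3)
proof (induction A rule: finite_induct)
  case empty
  then show ?case using assms(1) by (simp add: is_subspace_def)
next
  case (insert a A)
  then have "(\<lambda>k. c a * f a k) \<in> S" "(\<lambda>k. \<Sum>a\<in>A. c a * f a k) \<in> S"
    using assms(1) by (auto simp: is_subspace_def)
  with assms(1) have "(\<lambda>k. c a * f a k + (\<Sum>a\<in>A. c a * f a k)) \<in> S"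
    unfolding is_subspace_def by fast
  then show ?case using insert by simp
qed

lemma lin_span_least: "is_subspace S \<Longrightarrow> A \<subseteq> S \<Longrightarrow> lin_span A \<subseteq> S"
  unfolding lin_span_def using is_subspace_sum[where f="\<lambda>v. v"] by blast

lemma lin_span_superset: "v \<in> A \<Longrightarrow> v \<in> lin_span A"
  unfolding lin_span_def
  by (intro CollectI exI[of _ "{v}"] exI[of _ "\<lambda>_. 1"]) auto

lemma is_subspace_lin_span: "is_subspace (lin_span A)"
  unfolding is_subspace_def
proof (intro conjI ballI allI)
  show "(\<lambda>_. 0) \<in> lin_span A" unfolding lin_span_def by auto
next
  fix a x assume "x \<in> lin_span A"
  then obtain F c where "finite F" "F \<subseteq> A" "x = (\<lambda>k. \<Sum>v\<in>F. c v * v k)"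
    unfolding lin_span_def by blast
  then show "(\<lambda>k. a * x k) \<in> lin_span A" unfolding lin_span_def
    by (intro CollectI exI[of _ F] exI[of _ "\<lambda>v. a * c v"])
       (auto simp: sum_distrib_left mult.assoc)
next
  fix x y assume "x \<in> lin_span A" "y \<in> lin_span A"
  then obtain F c G d where F: "finite F" "F \<subseteq> A" "x = (\<lambda>k. \<Sum>v\<in>F. c v * v k)"
    and G: "finite G" "G \<subseteq> A" "y = (\<lambda>k. \<Sum>v\<in>G. d v * v k)"
    unfolding lin_span_def by blast
  define e where "e v = (if v \<in> F then c v else 0) + (if v \<in> G then d v else 0)" for v
  have "x k + y k = (\<Sum>v\<in>F \<union> G. e v * v k)" for k
  proof -
    have "(\<Sum>v\<in>F \<union> G. e v * v k) = (\<Sum>v\<in>F \<union> G. if v \<in> F then c v * v k else 0)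
        + (\<Sum>v\<in>F \<union> G. if v \<in> G then d v * v k else 0)"
      unfolding e_def sum.distrib[symmetric] by (intro sum.cong) (auto simp: distrib_right)
    also have "\<dots> = (\<Sum>v\<in>F. c v * v k) + (\<Sum>v\<in>G. d v * v k)"
      using F G by (simp add: sum.inter_restrict[symmetric] Int_absorb1 Int_absorb2 Un_Int_eq)
    finally show ?thesis using F G by simp
  qed
  then show "(\<lambda>k. x k + y k) \<in> lin_span A" unfolding lin_span_def
    using F G by (intro CollectI exI[of _ "F \<union> G"] exI[of _ e]) auto
qed

lemma is_subspace_lie_space: "is_subspace (lie_space I)"
  unfolding is_subspace_def lie_space_def by auto

lemma is_subspace_derived: "is_subspace (derived C I n)"
  by (cases n) (simp_all add: is_subspace_lie_space is_subspace_lin_span)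

lemma bracket_expanded_sc_slice:
  fixes C :: "'i::finite \<Rightarrow> 'i \<Rightarrow> 'i \<Rightarrow> 'k::field"
    and A :: "'s::ab_semigroup_mult set"
  assumes "finite A" "\<gamma> \<in> A"
  shows "bracket (expanded_sc C) (UNIV \<times> A) x y (m, \<gamma>)
    = (\<Sum>(\<alpha>, \<beta>)\<in>A \<times> A. selector \<alpha> \<beta> \<gamma> * bracket C UNIV (\<lambda>i. x (i, \<alpha>)) (\<lambda>i. y (i, \<beta>)) m)"
proof -
  have "bracket (expanded_sc C) (UNIV \<times> A) x y (m, \<gamma>)
     = (\<Sum>i\<in>UNIV. \<Sum>\<alpha>\<in>A. \<Sum>j\<in>UNIV. \<Sum>\<beta>\<in>A. selector \<alpha> \<beta> \<gamma> * (x (i, \<alpha>) * y (j, \<beta>) * C i j m))"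
    using assms(2)
    by (simp add: bracket_def sum.cartesian_product' expanded_sc_def mult_ac)
  also have "\<dots> = (\<Sum>\<alpha>\<in>A. \<Sum>i\<in>UNIV. \<Sum>\<beta>\<in>A. \<Sum>j\<in>UNIV.
        selector \<alpha> \<beta> \<gamma> * (x (i, \<alpha>) * y (j, \<beta>) * C i j m))"
    by (subst sum.swap) (intro sum.cong refl sum.swap)
  also have "\<dots> = (\<Sum>\<alpha>\<in>A. \<Sum>\<beta>\<in>A. \<Sum>i\<in>UNIV. \<Sum>j\<in>UNIV.
        selector \<alpha> \<beta> \<gamma> * (x (i, \<alpha>) * y (j, \<beta>) * C i j m))"
    by (intro sum.cong refl sum.swap)
  also have "\<dots> = (\<Sum>(\<alpha>, \<beta>)\<in>A \<times> A. selector \<alpha> \<beta> \<gamma> *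
        bracket C UNIV (\<lambda>i. x (i, \<alpha>)) (\<lambda>i. y (i, \<beta>)) m)"
    by (simp add: sum.cartesian_product' bracket_def sum_distrib_left mult_ac)
  finally show ?thesis .
qed

definition slicewise_derived :: "('i \<Rightarrow> 'i \<Rightarrow> 'i \<Rightarrow> 'k::field) \<Rightarrow> 's set \<Rightarrow> nat
    \<Rightarrow> ('i \<times> 's \<Rightarrow> 'k) set" where
  "slicewise_derived C A n =
     {x. x \<in> lie_space (UNIV \<times> A) \<and> (\<forall>\<alpha>. (\<lambda>i. x (i, \<alpha>)) \<in> derived C UNIV n)}"

lemma is_subspace_slicewise_derived: "is_subspace (slicewise_derived C A n)"
proof -
  have "is_subspace (derived C UNIV n)" by (rule is_subspace_derived)
  then have zero: "(\<lambda>_. 0) \<in> derived C UNIV n"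
    and add: "\<And>x y. x \<in> derived C UNIV n \<Longrightarrow> y \<in> derived C UNIV n
                 \<Longrightarrow> (\<lambda>k. x k + y k) \<in> derived C UNIV n"
    and scale: "\<And>a x. x \<in> derived C UNIV n \<Longrightarrow> (\<lambda>k. a * x k) \<in> derived C UNIV n"
    unfolding is_subspace_def by blast+
  show ?thesis
    unfolding is_subspace_def slicewise_derived_def lie_space_def
    using zero add scale by simp
qed

lemma bracket_slicewise_derived:
  fixes C :: "'i::finite \<Rightarrow> 'i \<Rightarrow> 'i \<Rightarrow> 'k::field"
    and A :: "'s::ab_semigroup_mult set"
  assumes "finite A" "x \<in> slicewise_derived C A n" "y \<in> slicewise_derived C A n"
  shows "bracket (expanded_sc C) (UNIV \<times> A) x y \<in> slicewise_derived C A (Suc n)"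
  unfolding slicewise_derived_def
proof (intro CollectI conjI allI)
  show "bracket (expanded_sc C) (UNIV \<times> A) x y \<in> lie_space (UNIV \<times> A)"
    by (simp add: bracket_def lie_space_def)
next
  fix \<gamma>
  have D: "is_subspace (derived C UNIV (Suc n))" by (rule is_subspace_derived)
  show "(\<lambda>i. bracket (expanded_sc C) (UNIV \<times> A) x y (i, \<gamma>)) \<in> derived C UNIV (Suc n)"
  proof (cases "\<gamma> \<in> A")
    case False
    then have "(\<lambda>i. bracket (expanded_sc C) (UNIV \<times> A) x y (i, \<gamma>)) = (\<lambda>_. 0)"
      by (simp add: bracket_def)
    then show ?thesis using D by (simp add: is_subspace_def)
  next
    case True
    have "bracket C UNIV (\<lambda>i. x (i, \<alpha>)) (\<lambda>i. y (i, \<beta>)) \<in> derived C UNIV (Suc n)" for \<alpha> \<beta>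
      using assms(2,3) by (auto simp: slicewise_derived_def intro!: lin_span_superset)
    then have "(\<lambda>m. \<Sum>p\<in>A \<times> A. selector (fst p) (snd p) \<gamma> *
        bracket C UNIV (\<lambda>i. x (i, fst p)) (\<lambda>i. y (i, snd p)) m) \<in> derived C UNIV (Suc n)"
      using assms(1) by (intro is_subspace_sum[OF D]) auto
    then show ?thesis
      by (simp add: bracket_expanded_sc_slice[OF assms(1) True] split_def)
  qed
qed

lemma derived_expanded_subset_slicewise:
  fixes C :: "'i::finite \<Rightarrow> 'i \<Rightarrow> 'i \<Rightarrow> 'k::field"
    and A :: "'s::ab_semigroup_mult set"
  assumes "finite A"
  shows "derived (expanded_sc C) (UNIV \<times> A) n \<subseteq> slicewise_derived C A n"
proof (induction n)
  case 0
  then show ?case by (auto simp: slicewise_derived_def lie_space_def)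
next
  case (Suc n)
  then show ?case
    unfolding derived.simps
    by (intro lin_span_least[OF is_subspace_slicewise_derived])
       (auto intro: bracket_slicewise_derived[OF assms])
qed

lemma solvable_lie_expanded_sc:
  fixes C :: "'i::finite \<Rightarrow> 'i \<Rightarrow> 'i \<Rightarrow> 'k::field"
    and A :: "'s::ab_semigroup_mult set"
  assumes "finite A" "solvable_lie C UNIV"
  shows "solvable_lie (expanded_sc C) (UNIV \<times> A)"
proof -
  obtain N where N: "derived C UNIV N = {\<lambda>_. 0}"
    using assms(2) by (auto simp: solvable_lie_def)
  have "x = (\<lambda>_. 0)" if "x \<in> derived (expanded_sc C) (UNIV \<times> A) N" for x
  proof -
    have "x \<in> slicewise_derived C A N"
      using derived_expanded_subset_slicewise[OF assms(1)] that by blast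
    then have "(\<lambda>i. x (i, \<alpha>)) = (\<lambda>_. 0)" for \<alpha>
      using N by (auto simp: slicewise_derived_def)
    then show ?thesis by (auto simp: fun_eq_iff dest: fun_cong)
  qed
  moreover have "(\<lambda>_. 0) \<in> derived (expanded_sc C) (UNIV \<times> A) N"
    using is_subspace_derived by (auto simp: is_subspace_def)
  ultimately show ?thesis unfolding solvable_lie_def by blast
qed

theorem theorem3:
  fixes C :: "'i::finite \<Rightarrow> 'i \<Rightarrow> 'i \<Rightarrow> 'k::field"
    and z :: "'s::{ab_semigroup_mult, finite}"
  assumes "is_lie_algebra C UNIV"
    and "solvable_lie C UNIV"
    and "\<forall>s. z * s = z"
  shows "solvable_lie (expanded_sc C) (reduced_index z :: ('i \<times> 's) set)"
  unfolding reduced_index_def by (rule solvable_lie_expanded_sc[OF finite assms(2)])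

end
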